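(* Let $\mathcal{S}_1,\dots,\mathcal{S}_n\subseteq\mathbb{R}^D$ be independent linear subspaces (i.e. $\sum_{\ell=1}^n d_\ell=\dim(\sum_\ell\mathcal{S}_\ell)$, $d_\ell=\dim\mathcal{S}_\ell$), and let $\mathcal{X}=\{\boldsymbol{x}_1,\dots,\boldsymbol{x}_N\}\subseteq\bigcup_\ell\mathcal{S}_\ell$ consist of unit-norm vectors such that each $\mathcal{S}_\ell$ contains at least $d_\ell$ points of $\mathcal{X}$ spanning $\mathcal{S}_\ell$. For every integer $k\ge\sum_{\ell=1}^n d_\ell$, any $\mathcal{X}_0^*\in\arg\min_{\mathcal{X}_0\subseteq\mathcal{X},|\mathcal{X}_0|\le k}F_\infty(\mathcal{X}_0)$ contains at least $d_\ell$ linearly independent points from each $\mathcal{S}_\ell$. Moreover, with $\mathcal{X}_0=\mathcal{X}_0^*$, the problem defining $f_\infty(\boldsymbol{x}_j,\mathcal{X}_0^* )$ is feasible for every $\boldsymbol{x}_j\in\mathcal{X}$ and all of its optimal solutions are subspace-preserving.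
   Context: For $\mathcal{X}_0\subseteq\mathcal{X}$ and $\boldsymbol{x}_j\in\mathcal{X}$, $f_\infty(\boldsymbol{x}_j,\mathcal{X}_0):=\min_{\boldsymbol{c}\in\mathbb{R}^N}\|\boldsymbol{c}\|_1$ subject to $\boldsymbol{x}_j=\sum_{i:\boldsymbol{x}_i\in\mathcal{X}_0}c_i\boldsymbol{x}_i$, with $f_\infty(\boldsymbol{x}_j,\mathcal{X}_0):=\infty$ if infeasible; $F_\infty(\mathcal{X}_0):=\sup_{\boldsymbol{x}_j\in\mathcal{X}}f_\infty(\boldsymbol{x}_j,\mathcal{X}_0)$. A vector $\boldsymbol{c}\in\mathbb{R}^N$ associated with $\boldsymbol{x}_j$ is subspace-preserving if $c_i\neq0$ implies that $\boldsymbol{x}_i$ and $\boldsymbol{x}_j$ lie in the same subspace $\mathcal{S}_\ell$. *)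

theory Defs
  imports "HOL-Analysis.Analysis"
begin

text \<open>Data X = {x_0,...,x_(N-1)} given by an indexing x :: nat => real^'d.
  A coefficient vector c in R^N is a function nat => real vanishing outside {..<N}.\<close>

definition feas_set ::
  "(nat \<Rightarrow> real^'d) \<Rightarrow> nat \<Rightarrow> (real^'d) set \<Rightarrow> nat \<Rightarrow> (nat \<Rightarrow> real) set" where
  "feas_set x N X0 j =
     {c. (\<forall>i. N \<le> i \<longrightarrow> c i = 0) \<and>
         x j = (\<Sum>i\<in>{i. i < N \<and> x i \<in> X0}. c i *\<^sub>R x i)}"

definition l1norm :: "nat \<Rightarrow> (nat \<Rightarrow> real) \<Rightarrow> real" where
  "l1norm N c = (\<Sum>i<N. \<bar>c i\<bar>)"

text \<open>f_infinity(x_j, X0): infimum of the l1 norm over feasible c; equals \<infinity> if infeasible.\<close>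
definition f_inf :: "(nat \<Rightarrow> real^'d) \<Rightarrow> nat \<Rightarrow> (real^'d) set \<Rightarrow> nat \<Rightarrow> ereal" where
  "f_inf x N X0 j = (INF c\<in>feas_set x N X0 j. ereal (l1norm N c))"

definition F_inf :: "(nat \<Rightarrow> real^'d) \<Rightarrow> nat \<Rightarrow> (real^'d) set \<Rightarrow> ereal" where
  "F_inf x N X0 = (SUP j\<in>{..<N}. f_inf x N X0 j)"

definition subspace_preserving ::
  "(nat \<Rightarrow> (real^'d) set) \<Rightarrow> nat \<Rightarrow> (nat \<Rightarrow> real^'d) \<Rightarrow> nat \<Rightarrow> nat \<Rightarrow> (nat \<Rightarrow> real) \<Rightarrow> bool" where
  "subspace_preserving S n x N j c =
     (\<forall>i<N. c i \<noteq> 0 \<longrightarrow> (\<exists>l<n. x i \<in> S l \<and> x j \<in> S l))"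

end

theory Submission imports Defs begin

text \<open>Independence of the subspaces means that each \<open>S l\<close> meets the span of the others only
  in 0. Consequently a combination of data points that lands in \<open>S l\<close> is unchanged when the
  points outside \<open>S l\<close> are dropped. Taking one basis of each \<open>S l\<close> from the data gives a
  dictionary of at most \<open>\<Sum>l. dim (S l)\<close> points with finite \<open>F_inf\<close>, so a minimiser has
  finite \<open>F_inf\<close>, i.e. it spans every data point; by the above it then spans each \<open>S l\<close>
  with its own points of \<open>S l\<close>. Finally, if an optimal representation used a point outside the
  subspace of \<open>x j\<close>, dropping those coefficients would give a feasible representation of
  strictly smaller \<open>\<ell>\<^sub>1\<close> norm.\<close>

lemma dim_Un_add_dim_Int_span:
  fixes A B :: "'a::euclidean_space set"
  shows "dim (A \<union> B) + dim (span A \<inter> span B) = dim A + dim B"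
proof -
  have "dim (A \<union> B) = dim (span (A \<union> B))"
    by simp
  also have "\<dots> = dim {x + y |x y. x \<in> span A \<and> y \<in> span B}"
    by (simp only: span_Un)
  finally show ?thesis
    using dim_sums_Int[of "span A" "span B"] by (simp only: subspace_span dim_span simp_thms)
qed

lemma dim_UN_le:
  fixes A :: "'i \<Rightarrow> 'a::euclidean_space set"
  assumes "finite I"
  shows "dim (\<Union>i\<in>I. A i) \<le> (\<Sum>i\<in>I. dim (A i))"
  using assms
proof (induction I rule: finite_induct)
  case (insert a I)
  have "dim (A a \<union> (\<Union>i\<in>I. A i)) \<le> dim (A a) + dim (\<Union>i\<in>I. A i)"
    using dim_Un_add_dim_Int_span[of "A a" "\<Union>i\<in>I. A i"] by linarith
  then show ?case
    using insert by simp
qed simp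

definition independent_subspaces :: "'i set \<Rightarrow> ('i \<Rightarrow> 'a::euclidean_space set) \<Rightarrow> bool" where
  "independent_subspaces I S \<longleftrightarrow>
     finite I \<and> (\<forall>i\<in>I. subspace (S i)) \<and> (\<Sum>i\<in>I. dim (S i)) = dim (\<Union>i\<in>I. S i)"

lemma independent_subspaces_Int_span_others:
  assumes indep: "independent_subspaces I S" and l: "l \<in> I"
  shows "S l \<inter> span (\<Union>m\<in>I - {l}. S m) = {0}"
proof -
  let ?U = "\<Union>m\<in>I - {l}. S m"
  have fin: "finite I" and sub: "subspace (S l)"
    and dims: "(\<Sum>i\<in>I. dim (S i)) = dim (\<Union>i\<in>I. S i)"
    using indep l unfolding independent_subspaces_def by auto
  have span_S: "span (S l) = S l"
    using sub by (rule span_eq_iff[THEN iffD2])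
  have "(\<Union>i\<in>I. S i) = S l \<union> ?U"
    using l by blast
  then have "dim (S l \<union> ?U) = (\<Sum>i\<in>I. dim (S i))"
    using dims by simp
  also have "\<dots> = dim (S l) + (\<Sum>m\<in>I - {l}. dim (S m))"
    using fin l by (simp add: sum.remove)
  finally have "dim (S l \<union> ?U) = dim (S l) + (\<Sum>m\<in>I - {l}. dim (S m))" .
  moreover have "dim ?U \<le> (\<Sum>m\<in>I - {l}. dim (S m))"
    using fin by (intro dim_UN_le) simp
  moreover have "dim (S l \<union> ?U) + dim (S l \<inter> span ?U) = dim (S l) + dim ?U"
    using dim_Un_add_dim_Int_span[of "S l" ?U] span_S by (simp only:)
  ultimately have "dim (S l \<inter> span ?U) = 0"
    by linarith
  then show ?thesis
    using sub span_zero subspace_0 by auto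
qed

lemma span_Int_component:
  assumes indep: "independent_subspaces I S" and l: "l \<in> I"
    and X: "X \<subseteq> (\<Union>i\<in>I. S i)" and v: "v \<in> S l" "v \<in> span X"
  shows "v \<in> span (X \<inter> S l)"
proof -
  have sub: "subspace (S l)"
    using indep l unfolding independent_subspaces_def by auto
  have "X = (X \<inter> S l) \<union> (X - S l)"
    by blast
  then obtain a b where a: "a \<in> span (X \<inter> S l)" and b: "b \<in> span (X - S l)" and "v = a + b"
    using v span_Un[of "X \<inter> S l" "X - S l"] by auto
  have "a \<in> S l"
    using a span_minimal[of "X \<inter> S l" "S l"] sub by auto
  then have "b \<in> S l"
    using \<open>v = a + b\<close> v sub subspace_diff[of "S l" v a] by simp
  moreover have "X - S l \<subseteq> (\<Union>m\<in>I - {l}. S m)"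
    using X by blast
  then have "b \<in> span (\<Union>m\<in>I - {l}. S m)"
    using b span_mono by blast
  ultimately have "b = 0"
    using independent_subspaces_Int_span_others[OF indep l] by blast
  then show ?thesis
    using a \<open>v = a + b\<close> by simp
qed

lemma sum_in_component_eq_restrict:
  fixes g :: "'j \<Rightarrow> 'a::euclidean_space"
  assumes indep: "independent_subspaces I S" and l: "l \<in> I" and J: "finite J"
    and g: "\<forall>i\<in>J. g i \<in> (\<Union>m\<in>I. S m)" and in_S: "(\<Sum>i\<in>J. u i *\<^sub>R g i) \<in> S l"
  shows "(\<Sum>i\<in>J. u i *\<^sub>R g i) = (\<Sum>i\<in>J \<inter> {i. g i \<in> S l}. u i *\<^sub>R g i)"
proof -
  define a where "a = (\<Sum>i\<in>J \<inter> {i. g i \<in> S l}. u i *\<^sub>R g i)"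
  define b where "b = (\<Sum>i\<in>J - {i. g i \<in> S l}. u i *\<^sub>R g i)"
  have sum_eq: "(\<Sum>i\<in>J. u i *\<^sub>R g i) = a + b"
    unfolding a_def b_def using J by (rule sum.Int_Diff)
  have sub: "subspace (S l)"
    using indep l unfolding independent_subspaces_def by auto
  have "a \<in> S l"
    unfolding a_def by (auto intro: subspace_sum[OF sub] subspace_scale[OF sub])
  then have "b \<in> S l"
    using sum_eq in_S subspace_diff[OF sub, of "a + b" a] by simp
  moreover have "b \<in> span (\<Union>m\<in>I - {l}. S m)"
    unfolding b_def using g by (intro span_sum span_mul span_base) blast
  ultimately have "b = 0"
    using independent_subspaces_Int_span_others[OF indep l] by blast
  then show ?thesis
    using sum_eq a_def by simp
qed

lemma obtain_basis_in_spanning_set: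
  assumes "span A = V"
  obtains B where "B \<subseteq> A" "independent B" "span B = V" "card B = dim V"
proof -
  obtain B where B: "B \<subseteq> A" "independent B" "A \<subseteq> span B" "card B = dim A"
    by (rule basis_exists)
  have "span B \<subseteq> V"
    using assms span_mono[OF B(1)] by simp
  moreover have "V \<subseteq> span B"
    using assms span_mono[OF B(3)] by (simp add: span_span)
  moreover have "dim A = dim V"
    using assms dim_span[of A] by simp
  ultimately show ?thesis
    using B that by (simp add: subset_antisym)
qed

lemma exists_small_spanning_subset:
  fixes S :: "'i \<Rightarrow> 'a::euclidean_space set"
  assumes I: "finite I" and P: "P \<subseteq> (\<Union>l\<in>I. S l)"
    and spanned: "\<forall>l\<in>I. \<exists>A. A \<subseteq> S l \<inter> P \<and> span A = S l"
  obtains X0 where "X0 \<subseteq> P" "card X0 \<le> (\<Sum>l\<in>I. dim (S l))" "P \<subseteq> span X0"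
proof -
  have bases: "\<forall>l\<in>I. \<exists>B. B \<subseteq> P \<and> span B = S l \<and> card B = dim (S l)"
  proof
    fix l assume "l \<in> I"
    then obtain A where A: "A \<subseteq> S l \<inter> P" "span A = S l"
      using spanned by blast
    obtain B where "B \<subseteq> A" "independent B" "span B = S l" "card B = dim (S l)"
      by (rule obtain_basis_in_spanning_set[OF A(2)])
    then show "\<exists>B. B \<subseteq> P \<and> span B = S l \<and> card B = dim (S l)"
      using A(1) by blast
  qed
  obtain B where B: "\<forall>l\<in>I. B l \<subseteq> P \<and> span (B l) = S l \<and> card (B l) = dim (S l)"
    using bchoice[OF bases] by blast
  show ?thesis
  proof
    show "(\<Union>l\<in>I. B l) \<subseteq> P"
      using B by blast
    have "card (\<Union>l\<in>I. B l) \<le> (\<Sum>l\<in>I. card (B l))"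
      using I by (rule card_UN_le)
    then show "card (\<Union>l\<in>I. B l) \<le> (\<Sum>l\<in>I. dim (S l))"
      using B by simp
    show "P \<subseteq> span (\<Union>l\<in>I. B l)"
    proof
      fix p assume "p \<in> P"
      then obtain l where l: "l \<in> I" "p \<in> S l"
        using P by blast
      then have "p \<in> span (B l)"
        using B by simp
      then show "p \<in> span (\<Union>l\<in>I. B l)"
        using l span_mono[of "B l" "\<Union>l\<in>I. B l"] by blast
    qed
  qed
qed

lemma components_subset_span:
  assumes spanned: "\<forall>l\<in>I. \<exists>A. A \<subseteq> S l \<inter> P \<and> span A = S l" and P: "P \<subseteq> span X"
    and l: "l \<in> I"
  shows "S l \<subseteq> span X"
proof -
  obtain A where A: "A \<subseteq> S l \<inter> P" "span A = S l"
    using spanned l by auto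
  then have "A \<subseteq> P"
    by (simp only: Int_subset_iff)
  then have "span A \<subseteq> span X"
    using P by (metis span_mono span_span subset_trans)
  then show ?thesis
    by (simp only: A(2))
qed

lemma independent_subset_of_component:
  assumes indep: "independent_subspaces I S" and l: "l \<in> I"
    and X: "X \<subseteq> (\<Union>i\<in>I. S i)" and spans: "S l \<subseteq> span X"
  obtains A where "A \<subseteq> X \<inter> S l" "independent A" "card A = dim (S l)"
proof -
  have "subspace (S l)"
    using indep l unfolding independent_subspaces_def by auto
  then have "span (X \<inter> S l) \<subseteq> S l"
    by (simp add: span_minimal)
  moreover have "S l \<subseteq> span (X \<inter> S l)"
    using span_Int_component[OF indep l X] spans by blast
  ultimately have "dim (X \<inter> S l) = dim (S l)"
    using dim_span[of "X \<inter> S l"] by simp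
  moreover obtain A where "A \<subseteq> X \<inter> S l" "independent A" "card A = dim (X \<inter> S l)"
    by (rule basis_exists)
  ultimately show ?thesis
    using that by simp
qed

lemma feas_set_nonempty_iff:
  fixes x :: "nat \<Rightarrow> real^'d"
  assumes X0: "X0 \<subseteq> x ` {..<N}" and inj: "inj_on x {..<N}"
  shows "feas_set x N X0 j \<noteq> {} \<longleftrightarrow> x j \<in> span X0"
proof
  assume "feas_set x N X0 j \<noteq> {}"
  then obtain c where "x j = (\<Sum>i\<in>{i. i < N \<and> x i \<in> X0}. c i *\<^sub>R x i)"
    unfolding feas_set_def by auto
  then show "x j \<in> span X0"
    by (auto intro: span_sum span_mul span_base)
next
  assume "x j \<in> span X0"
  moreover have fin: "finite X0"
    using X0 finite_subset by blast
  ultimately obtain u where u: "x j = (\<Sum>v\<in>X0. u v *\<^sub>R v)"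
    using span_finite by auto
  define I where "I = {i. i < N \<and> x i \<in> X0}"
  define c where "c i = (if i < N \<and> x i \<in> X0 then u (x i) else 0)" for i
  have "inj_on x I"
    using inj unfolding I_def by (rule inj_on_subset) auto
  moreover have "x ` I = X0"
    using X0 unfolding I_def by auto
  ultimately have "(\<Sum>i\<in>I. c i *\<^sub>R x i) = x j"
    using u sum.reindex[of x I "\<lambda>v. u v *\<^sub>R v"] by (simp add: c_def I_def)
  then have "c \<in> feas_set x N X0 j"
    unfolding feas_set_def I_def c_def by auto
  then show "feas_set x N X0 j \<noteq> {}"
    by blast
qed

lemma f_inf_less_infinity_iff: "f_inf x N X0 j < \<infinity> \<longleftrightarrow> feas_set x N X0 j \<noteq> {}"
proof
  assume "f_inf x N X0 j < \<infinity>"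
  then show "feas_set x N X0 j \<noteq> {}"
    unfolding f_inf_def by (auto simp: top_ereal_def)
next
  assume "feas_set x N X0 j \<noteq> {}"
  then obtain c where "c \<in> feas_set x N X0 j"
    by blast
  then have "f_inf x N X0 j \<le> ereal (l1norm N c)"
    unfolding f_inf_def by (rule INF_lower)
  then show "f_inf x N X0 j < \<infinity>"
    using le_less_trans[of _ "ereal (l1norm N c)" \<infinity>] by simp
qed

lemma F_inf_less_infinity_iff: "F_inf x N X0 < \<infinity> \<longleftrightarrow> (\<forall>j<N. f_inf x N X0 j < \<infinity>)"
proof
  assume "F_inf x N X0 < \<infinity>"
  then show "\<forall>j<N. f_inf x N X0 j < \<infinity>"
    unfolding F_inf_def by (metis SUP_upper le_less_trans lessThan_iff)
next
  assume fin: "\<forall>j<N. f_inf x N X0 j < \<infinity>"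
  show "F_inf x N X0 < \<infinity>"
  proof (cases "N = 0")
    case True
    then show ?thesis
      by (simp add: F_inf_def bot_ereal_def)
  next
    case False
    then show ?thesis
      unfolding F_inf_def using fin by (subst finite_Sup_less_iff) auto
  qed
qed

lemma F_inf_less_infinity_iff_span:
  fixes x :: "nat \<Rightarrow> real^'d"
  assumes "X0 \<subseteq> x ` {..<N}" and "inj_on x {..<N}"
  shows "F_inf x N X0 < \<infinity> \<longleftrightarrow> x ` {..<N} \<subseteq> span X0"
  unfolding F_inf_less_infinity_iff f_inf_less_infinity_iff feas_set_nonempty_iff[OF assms]
  by blast

lemma data_subset_span_if_F_inf_le:
  fixes x :: "nat \<Rightarrow> real^'d"
  assumes inj: "inj_on x {..<N}" and X0: "X0 \<subseteq> x ` {..<N}" and Y0: "Y0 \<subseteq> x ` {..<N}"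
    and Y0_spans: "x ` {..<N} \<subseteq> span Y0" and le: "F_inf x N X0 \<le> F_inf x N Y0"
  shows "x ` {..<N} \<subseteq> span X0"
proof -
  note le
  also have "F_inf x N Y0 < \<infinity>"
    unfolding F_inf_less_infinity_iff_span[OF Y0 inj] by (rule Y0_spans)
  finally show ?thesis
    unfolding F_inf_less_infinity_iff_span[OF X0 inj] .
qed

lemma restrict_to_component_feasible:
  fixes x :: "nat \<Rightarrow> real^'d"
  assumes indep: "independent_subspaces I S" and l: "l \<in> I" "x j \<in> S l"
    and X0: "X0 \<subseteq> (\<Union>i\<in>I. S i)" and c: "c \<in> feas_set x N X0 j"
  shows "(\<lambda>i. if i < N \<and> x i \<in> X0 \<inter> S l then c i else 0) \<in> feas_set x N X0 j"
proof -
  define J where "J = {i. i < N \<and> x i \<in> X0}"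
  have c_sum: "x j = (\<Sum>i\<in>J. c i *\<^sub>R x i)"
    using c unfolding feas_set_def J_def by auto
  also have "\<dots> = (\<Sum>i\<in>J \<inter> {i. x i \<in> S l}. c i *\<^sub>R x i)"
    using c_sum l X0 by (intro sum_in_component_eq_restrict[OF indep l(1)]) (auto simp: J_def)
  also have "\<dots> = (\<Sum>i\<in>J. (if i < N \<and> x i \<in> X0 \<inter> S l then c i else 0) *\<^sub>R x i)"
    by (rule sum.mono_neutral_cong_left) (auto simp: J_def)
  finally show ?thesis
    unfolding feas_set_def J_def by auto
qed

lemma optimal_solution_subspace_preserving:
  fixes x :: "nat \<Rightarrow> real^'d"
  assumes indep: "independent_subspaces {..<n} S" and xj: "x j \<in> (\<Union>l<n. S l)"
    and X0: "X0 \<subseteq> (\<Union>l<n. S l)" and c: "c \<in> feas_set x N X0 j"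
    and opt: "ereal (l1norm N c) = f_inf x N X0 j"
  shows "subspace_preserving S n x N j c"
proof -
  obtain l where l: "l < n" "x j \<in> S l"
    using xj by blast
  define c' where "c' i = (if i < N \<and> x i \<in> X0 \<inter> S l then c i else 0)" for i
  have "c' \<in> feas_set x N X0 j"
    unfolding c'_def using l X0 c by (intro restrict_to_component_feasible[OF indep]) auto
  then have "f_inf x N X0 j \<le> ereal (l1norm N c')"
    unfolding f_inf_def by (rule INF_lower)
  then have "ereal (l1norm N c) \<le> ereal (l1norm N c')"
    by (simp only: opt)
  then have "l1norm N c \<le> l1norm N c'"
    by simp
  moreover have "l1norm N c' < l1norm N c" if "i < N" "c i \<noteq> 0" "x i \<notin> S l" for i
    unfolding l1norm_def using that by (intro sum_strict_mono_ex1) (auto simp: c'_def)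
  ultimately show ?thesis
    unfolding subspace_preserving_def using l by (meson not_le)
qed

theorem theorem1:
  fixes S :: "nat \<Rightarrow> (real^'d) set" and n :: nat
    and x :: "nat \<Rightarrow> real^'d" and N :: nat
    and k :: nat and X0s :: "(real^'d) set"
  assumes subsp: "\<forall>l<n. subspace (S l)"
    and indep_subsp: "(\<Sum>l<n. dim (S l)) = dim (span (\<Union>l<n. S l))"
    and distinct_pts: "inj_on x {..<N}"
    and in_union: "\<forall>j<N. x j \<in> (\<Union>l<n. S l)"
    and unit: "\<forall>j<N. norm (x j) = 1"
    and spanning: "\<forall>l<n. \<exists>A. A \<subseteq> S l \<inter> x ` {..<N} \<and> card A \<ge> dim (S l) \<and> span A = S l"
    and k_ge: "k \<ge> (\<Sum>l<n. dim (S l))"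
    and X0s_sub: "X0s \<subseteq> x ` {..<N}"
    and X0s_card: "card X0s \<le> k"
    and X0s_min: "\<forall>X0. X0 \<subseteq> x ` {..<N} \<and> card X0 \<le> k \<longrightarrow> F_inf x N X0s \<le> F_inf x N X0"
  shows "(\<forall>l<n. \<exists>A. A \<subseteq> X0s \<inter> S l \<and> card A \<ge> dim (S l) \<and> independent A)
       \<and> (\<forall>j<N. feas_set x N X0s j \<noteq> {} \<and>
            (\<forall>c\<in>feas_set x N X0s j. ereal (l1norm N c) = f_inf x N X0s j
                 \<longrightarrow> subspace_preserving S n x N j c))"
proof -
  have indep: "independent_subspaces {..<n} S"
    using subsp indep_subsp unfolding independent_subspaces_def by simp
  have data: "x ` {..<N} \<subseteq> (\<Union>l<n. S l)"
    using in_union by blast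
  have spanned: "\<forall>l\<in>{..<n}. \<exists>A. A \<subseteq> S l \<inter> x ` {..<N} \<and> span A = S l"
    using spanning by blast
  obtain X0 where X0: "X0 \<subseteq> x ` {..<N}" "card X0 \<le> (\<Sum>l<n. dim (S l))"
      "x ` {..<N} \<subseteq> span X0"
    by (rule exists_small_spanning_subset[OF finite_lessThan data spanned])
  have "F_inf x N X0s \<le> F_inf x N X0"
    using X0s_min X0(1) le_trans[OF X0(2) k_ge] by blast
  then have spans: "x ` {..<N} \<subseteq> span X0s"
    by (rule data_subset_span_if_F_inf_le[OF distinct_pts X0s_sub X0(1,3)])
  have X0s_data: "X0s \<subseteq> (\<Union>l<n. S l)"
    using X0s_sub data by (rule subset_trans)
  have "\<exists>A. A \<subseteq> X0s \<inter> S l \<and> card A \<ge> dim (S l) \<and> independent A" if l: "l \<in> {..<n}" for l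
  proof -
    obtain A where "A \<subseteq> X0s \<inter> S l" "independent A" "card A = dim (S l)"
      using independent_subset_of_component[OF indep l X0s_data
          components_subset_span[OF spanned spans l]] .
    then show ?thesis
      by (intro exI[of _ A]) simp
  qed
  moreover have "feas_set x N X0s j \<noteq> {}" if "j < N" for j
    unfolding feas_set_nonempty_iff[OF X0s_sub distinct_pts] using spans that by blast
  moreover have "subspace_preserving S n x N j c"
    if "j < N" "c \<in> feas_set x N X0s j" "ereal (l1norm N c) = f_inf x N X0s j" for j c
    using optimal_solution_subspace_preserving[OF indep _ X0s_data that(2,3)] in_union that(1) by blast
  ultimately show ?thesis
    by blast
qed

end
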